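(* Let $t\geq 1$ be an integer. Let $(V,P)$ be an irreducible, reversible Markov process on a finite set $V$ with stationary distribution $\pi$, and let $\sigma,\nu$ be probability distributions on $V$ with disjoint supports. Then \[\sum_{v\in V}\frac{\nu_v^2}{\pi_v}\leq 2R_{\mathrm{eff}}(P^t;\sigma-\nu).\]
   Context: A Markov process $(V,P)$ has a row-stochastic transition matrix $P$; irreducible means every state can reach every other with positive probability in some number of steps (then the stationary distribution $\pi=\pi P$ is unique with $\pi_v>0$); reversible means $\pi_vP_{vw}=\pi_wP_{wv}$ for all $v,w$ (so $P^t$ is also reversible with respect to $\pi$). For a process $Q$ reversible with respect to $\pi$, associate the undirected graph on $V$ with an edge $\{v,w\}$ whenever $Q_{vw}>0$ and resistance $r_{\{v,w\}}=1/(\pi_vQ_{vw})$, each edge arbitrarily oriented. For $\xi\in\mathbb{R}^V$, $R_{\mathrm{eff}}(Q;\xi)$ is the minimum of the energy $\sum_e r_ef_e^2$ over flows $f:E\to\mathbb{R}$ whose net-flow $\delta_f(v)=\sum_{e\text{ out of }v}f_e-\sum_{e\text{ into }v}f_e$ equals $\xi$ (taken to be $+\infty$ if no such flow exists). *)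

theory Defs
  imports "HOL-Analysis.Analysis" "HOL-Library.Extended_Real"
begin

(* Markov kernels on a finite state set V, represented as functions 'v => 'v => real;
   only the values on V x V matter. *)

definition stochastic :: "'v set \<Rightarrow> ('v \<Rightarrow> 'v \<Rightarrow> real) \<Rightarrow> bool" where
  "stochastic V P \<longleftrightarrow> (\<forall>v\<in>V. \<forall>w\<in>V. P v w \<ge> 0) \<and> (\<forall>v\<in>V. (\<Sum>w\<in>V. P v w) = 1)"

fun mpow :: "'v set \<Rightarrow> ('v \<Rightarrow> 'v \<Rightarrow> real) \<Rightarrow> nat \<Rightarrow> 'v \<Rightarrow> 'v \<Rightarrow> real" where
  "mpow V P 0 = (\<lambda>v w. if v = w then 1 else 0)"
| "mpow V P (Suc n) = (\<lambda>v w. \<Sum>u\<in>V. mpow V P n v u * P u w)"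

definition irreducible_chain :: "'v set \<Rightarrow> ('v \<Rightarrow> 'v \<Rightarrow> real) \<Rightarrow> bool" where
  "irreducible_chain V P \<longleftrightarrow> (\<forall>v\<in>V. \<forall>w\<in>V. \<exists>n. mpow V P n v w > 0)"

definition stationary :: "'v set \<Rightarrow> ('v \<Rightarrow> 'v \<Rightarrow> real) \<Rightarrow> ('v \<Rightarrow> real) \<Rightarrow> bool" where
  "stationary V P \<pi> \<longleftrightarrow> (\<forall>v\<in>V. \<pi> v \<ge> 0) \<and> (\<Sum>v\<in>V. \<pi> v) = 1 \<and>
     (\<forall>w\<in>V. (\<Sum>v\<in>V. \<pi> v * P v w) = \<pi> w)"

definition reversible :: "'v set \<Rightarrow> ('v \<Rightarrow> 'v \<Rightarrow> real) \<Rightarrow> ('v \<Rightarrow> real) \<Rightarrow> bool" where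
  "reversible V P \<pi> \<longleftrightarrow> (\<forall>v\<in>V. \<forall>w\<in>V. \<pi> v * P v w = \<pi> w * P w v)"

definition prob_dist :: "'v set \<Rightarrow> ('v \<Rightarrow> real) \<Rightarrow> bool" where
  "prob_dist V \<mu> \<longleftrightarrow> (\<forall>v\<in>V. \<mu> v \<ge> 0) \<and> (\<Sum>v\<in>V. \<mu> v) = 1"

definition supp :: "'v set \<Rightarrow> ('v \<Rightarrow> real) \<Rightarrow> 'v set" where
  "supp V \<mu> = {v\<in>V. \<mu> v \<noteq> 0}"

(* Electrical network of a process Q reversible w.r.t. pi: edge {v,w} (v \<noteq> w) iff Q v w > 0,
   resistance 1/(pi v * Q v w).  A flow with an arbitrary orientation of each edge is
   encoded equivalently as an antisymmetric function on ordered pairs supported on edges;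
   each undirected edge then contributes r_e f_e^2 = (1/2)(r f(v,w)^2 + r f(w,v)^2). *)

definition is_flow :: "'v set \<Rightarrow> ('v \<Rightarrow> 'v \<Rightarrow> real) \<Rightarrow> ('v \<Rightarrow> 'v \<Rightarrow> real) \<Rightarrow> bool" where
  "is_flow V Q f \<longleftrightarrow>
     (\<forall>v w. f v w = - f w v) \<and>
     (\<forall>v w. f v w \<noteq> 0 \<longrightarrow> v \<in> V \<and> w \<in> V \<and> v \<noteq> w \<and> Q v w > 0)"

definition net_flow :: "'v set \<Rightarrow> ('v \<Rightarrow> 'v \<Rightarrow> real) \<Rightarrow> 'v \<Rightarrow> real" where
  "net_flow V f v = (\<Sum>w\<in>V. f v w)"

definition energy :: "'v set \<Rightarrow> ('v \<Rightarrow> 'v \<Rightarrow> real) \<Rightarrow> ('v \<Rightarrow> real) \<Rightarrow> ('v \<Rightarrow> 'v \<Rightarrow> real) \<Rightarrow> real" where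
  "energy V Q \<pi> f = (1/2) * (\<Sum>v\<in>V. \<Sum>w\<in>V. if v \<noteq> w \<and> Q v w > 0
        then (1 / (\<pi> v * Q v w)) * (f v w)\<^sup>2 else 0)"

(* effective resistance: infimum (it is attained) of energies of flows with net flow xi;
   +infinity if no such flow exists (Inf of the empty set of ereals). *)
definition R_eff :: "'v set \<Rightarrow> ('v \<Rightarrow> 'v \<Rightarrow> real) \<Rightarrow> ('v \<Rightarrow> real) \<Rightarrow> ('v \<Rightarrow> real) \<Rightarrow> ereal" where
  "R_eff V Q \<pi> \<xi> = Inf {ereal (energy V Q \<pi> f) | f.
       is_flow V Q f \<and> (\<forall>v\<in>V. net_flow V f v = \<xi> v)}"

end

theory Submission
  imports Defs
begin

text \<open>Pair a flow \<open>f\<close> with net flow \<open>\<sigma> - \<nu>\<close> against the potential \<open>\<phi> = \<nu> / \<pi>\<close>. Disjointness of the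
  supports gives \<open>\<langle>\<sigma> - \<nu>, \<phi>\<rangle> = -S\<close> with \<open>S = \<Sum>\<^sub>v \<nu>\<^sub>v\<^sup>2 / \<pi>\<^sub>v = \<Sum>\<^sub>v \<pi>\<^sub>v \<phi>\<^sub>v\<^sup>2\<close>. Summation by parts and
  AM-GM on every edge bound \<open>-\<langle>\<sigma> - \<nu>, \<phi>\<rangle>\<close> by \<open>E(f) + D(\<phi>)/8\<close>, where
  \<open>D(\<phi>) = \<Sum>\<^sub>v\<^sub>w \<pi>\<^sub>v Q\<^sub>v\<^sub>w (\<phi>\<^sub>w - \<phi>\<^sub>v)\<^sup>2\<close> and \<open>Q = P\<^sup>t\<close>; since \<open>Q\<close> is stochastic with stationary \<open>\<pi>\<close>,
  \<open>D(\<phi>) \<le> 4 S\<close>. Hence \<open>S \<le> E(f) + S/2\<close>.\<close>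

lemma stochastic_mpow:
  assumes "finite V" "stochastic V P"
  shows "stochastic V (mpow V P n)"
proof (induction n)
  case 0
  then show ?case using assms(1) by (simp add: stochastic_def)
next
  case (Suc n)
  have P: "\<And>u w. u \<in> V \<Longrightarrow> w \<in> V \<Longrightarrow> P u w \<ge> 0" "\<And>u. u \<in> V \<Longrightarrow> (\<Sum>w\<in>V. P u w) = 1"
    using assms(2) by (auto simp: stochastic_def)
  have M: "\<And>v u. v \<in> V \<Longrightarrow> u \<in> V \<Longrightarrow> mpow V P n v u \<ge> 0"
    "\<And>v. v \<in> V \<Longrightarrow> (\<Sum>u\<in>V. mpow V P n v u) = 1"
    using Suc.IH by (auto simp: stochastic_def)
  have "(\<Sum>w\<in>V. \<Sum>u\<in>V. mpow V P n v u * P u w) = 1" if "v \<in> V" for v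
  proof -
    have "(\<Sum>w\<in>V. \<Sum>u\<in>V. mpow V P n v u * P u w) = (\<Sum>u\<in>V. mpow V P n v u * (\<Sum>w\<in>V. P u w))"
      by (subst sum.swap) (simp add: sum_distrib_left)
    also have "\<dots> = 1" using P(2) M(2)[OF that] by simp
    finally show ?thesis .
  qed
  then show ?case using P(1) M(1) by (simp add: stochastic_def sum_nonneg)
qed

lemma stationary_mpow:
  assumes "finite V" "stationary V P \<pi>"
  shows "stationary V (mpow V P n) \<pi>"
proof (induction n)
  case 0
  have "(\<Sum>v\<in>V. \<pi> v * mpow V P 0 v w) = \<pi> w" if "w \<in> V" for w
    using assms(1) that by (simp add: if_distrib cong: if_cong)
  then show ?case using assms(2) by (simp add: stationary_def)
next
  case (Suc n)
  have "(\<Sum>v\<in>V. \<pi> v * mpow V P (Suc n) v w) = \<pi> w" if "w \<in> V" for w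
  proof -
    have "(\<Sum>v\<in>V. \<pi> v * mpow V P (Suc n) v w) = (\<Sum>u\<in>V. (\<Sum>v\<in>V. \<pi> v * mpow V P n v u) * P u w)"
      by (simp add: sum_distrib_left sum_distrib_right mult.assoc) (rule sum.swap)
    also have "\<dots> = (\<Sum>u\<in>V. \<pi> u * P u w)" using Suc.IH by (simp add: stationary_def)
    also have "\<dots> = \<pi> w" using assms(2) that by (simp add: stationary_def)
    finally show ?thesis .
  qed
  then show ?case using assms(2) by (simp add: stationary_def)
qed

lemma stationary_pos:
  assumes "finite V" "stochastic V P" "irreducible_chain V P" "stationary V P \<pi>" "w \<in> V"
  shows "\<pi> w > 0"
proof -
  have \<pi>_nonneg: "\<And>v. v \<in> V \<Longrightarrow> \<pi> v \<ge> 0" and "(\<Sum>v\<in>V. \<pi> v) = 1"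
    using assms(4) by (auto simp: stationary_def)
  have "\<not> (\<forall>v\<in>V. \<pi> v \<le> 0)"
  proof
    assume "\<forall>v\<in>V. \<pi> v \<le> 0"
    then have "(\<Sum>v\<in>V. \<pi> v) \<le> 0" by (simp add: sum_nonpos)
    with \<open>(\<Sum>v\<in>V. \<pi> v) = 1\<close> show False by simp
  qed
  then obtain v where v: "v \<in> V" "\<pi> v > 0" by (auto simp: not_le)
  obtain n where n: "mpow V P n v w > 0"
    using assms(3,5) v(1) unfolding irreducible_chain_def by blast
  have "\<And>u. u \<in> V \<Longrightarrow> 0 \<le> \<pi> u * mpow V P n u w"
    using stochastic_mpow[OF assms(1,2), of n] assms(5) \<pi>_nonneg unfolding stochastic_def by simp
  then have "\<pi> v * mpow V P n v w \<le> (\<Sum>u\<in>V. \<pi> u * mpow V P n u w)"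
    using assms(1) v(1) by (intro member_le_sum) auto
  also have "\<dots> = \<pi> w"
    using stationary_mpow[OF assms(1,4), of n] assms(5) unfolding stationary_def by blast
  finally show ?thesis using mult_pos_pos[OF v(2) n] by simp
qed

lemma mult_le_power2_div_add:
  fixes c :: real
  assumes "c > 0"
  shows "x * y \<le> x\<^sup>2 / c + c * y\<^sup>2 / 4"
proof -
  have "0 \<le> (x - c * y / 2)\<^sup>2 / c" using assms by simp
  also have "\<dots> = x\<^sup>2 / c - x * y + c * y\<^sup>2 / 4"
    using assms by (simp add: power2_eq_square field_simps)
  finally show ?thesis by simp
qed

lemma net_flow_summation_by_parts:
  assumes "is_flow V Q f"
  shows "(\<Sum>v\<in>V. net_flow V f v * \<phi> v) = - (\<Sum>v\<in>V. \<Sum>w\<in>V. f v w * (\<phi> w - \<phi> v)) / 2"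
proof -
  have anti: "f v w * \<phi> w = - (f w v * \<phi> w)" for v w
    using assms unfolding is_flow_def by (metis mult_minus_left)
  have "(\<Sum>v\<in>V. \<Sum>w\<in>V. f v w * \<phi> w) = (\<Sum>w\<in>V. \<Sum>v\<in>V. f v w * \<phi> w)"
    by (rule sum.swap)
  also have "\<dots> = (\<Sum>w\<in>V. \<Sum>v\<in>V. - (f w v * \<phi> w))"
    by (intro sum.cong refl) (simp add: anti)
  also have "\<dots> = - (\<Sum>v\<in>V. net_flow V f v * \<phi> v)"
    by (simp add: net_flow_def sum_negf sum_distrib_right)
  finally have "(\<Sum>v\<in>V. \<Sum>w\<in>V. f v w * \<phi> w) = - (\<Sum>v\<in>V. net_flow V f v * \<phi> v)" .
  moreover have "(\<Sum>v\<in>V. \<Sum>w\<in>V. f v w * \<phi> v) = (\<Sum>v\<in>V. net_flow V f v * \<phi> v)"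
    by (simp add: net_flow_def sum_distrib_right)
  ultimately show ?thesis by (simp add: right_diff_distrib sum_subtractf)
qed

lemma dirichlet_form_le:
  assumes "finite V" "stochastic V Q" "stationary V Q \<pi>"
  shows "(\<Sum>v\<in>V. \<Sum>w\<in>V. \<pi> v * Q v w * (\<phi> w - \<phi> v)\<^sup>2) \<le> 4 * (\<Sum>v\<in>V. \<pi> v * (\<phi> v)\<^sup>2)"
proof -
  let ?S = "\<Sum>v\<in>V. \<pi> v * (\<phi> v)\<^sup>2"
  have in_flux: "(\<Sum>v\<in>V. \<Sum>w\<in>V. \<pi> v * Q v w * (\<phi> w)\<^sup>2) = ?S"
  proof -
    have "(\<Sum>v\<in>V. \<Sum>w\<in>V. \<pi> v * Q v w * (\<phi> w)\<^sup>2) = (\<Sum>w\<in>V. (\<Sum>v\<in>V. \<pi> v * Q v w) * (\<phi> w)\<^sup>2)"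
      by (subst sum.swap) (simp add: sum_distrib_right)
    also have "\<dots> = ?S" using assms(3) by (simp add: stationary_def)
    finally show ?thesis .
  qed
  have out_flux: "(\<Sum>v\<in>V. \<Sum>w\<in>V. \<pi> v * Q v w * (\<phi> v)\<^sup>2) = ?S"
  proof -
    have "(\<Sum>v\<in>V. \<Sum>w\<in>V. \<pi> v * Q v w * (\<phi> v)\<^sup>2) = (\<Sum>v\<in>V. \<pi> v * (\<phi> v)\<^sup>2 * (\<Sum>w\<in>V. Q v w))"
      by (intro sum.cong refl, subst sum_distrib_left) (simp add: mult_ac)
    also have "\<dots> = ?S" using assms(2) by (simp add: stochastic_def)
    finally show ?thesis .
  qed
  have "(\<Sum>v\<in>V. \<Sum>w\<in>V. \<pi> v * Q v w * (\<phi> w - \<phi> v)\<^sup>2)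
      \<le> (\<Sum>v\<in>V. \<Sum>w\<in>V. 2 * (\<pi> v * Q v w * (\<phi> w)\<^sup>2) + 2 * (\<pi> v * Q v w * (\<phi> v)\<^sup>2))"
  proof (intro sum_mono)
    fix v w assume "v \<in> V" "w \<in> V"
    then have "\<pi> v * Q v w \<ge> 0" using assms(2,3) by (simp add: stochastic_def stationary_def)
    moreover have "(\<phi> w - \<phi> v)\<^sup>2 \<le> 2 * (\<phi> w)\<^sup>2 + 2 * (\<phi> v)\<^sup>2"
      using zero_le_power2[of "\<phi> w + \<phi> v"] by (simp add: power2_eq_square algebra_simps)
    ultimately show "\<pi> v * Q v w * (\<phi> w - \<phi> v)\<^sup>2
        \<le> 2 * (\<pi> v * Q v w * (\<phi> w)\<^sup>2) + 2 * (\<pi> v * Q v w * (\<phi> v)\<^sup>2)"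
      by (metis mult_left_mono distrib_left mult.left_commute)
  qed
  also have "\<dots> = 4 * ?S"
    using in_flux out_flux by (simp add: sum.distrib sum_distrib_left[symmetric])
  finally show ?thesis .
qed

lemma flow_pairing_le:
  assumes "is_flow V Q f" "\<And>v. v \<in> V \<Longrightarrow> \<pi> v > 0" "\<And>v w. v \<in> V \<Longrightarrow> w \<in> V \<Longrightarrow> Q v w \<ge> 0"
  shows "(\<Sum>v\<in>V. \<Sum>w\<in>V. f v w * (\<phi> w - \<phi> v))
    \<le> 2 * energy V Q \<pi> f + (\<Sum>v\<in>V. \<Sum>w\<in>V. \<pi> v * Q v w * (\<phi> w - \<phi> v)\<^sup>2) / 4"
proof -
  define e where "e v w = (if v \<noteq> w \<and> Q v w > 0 then 1 / (\<pi> v * Q v w) * (f v w)\<^sup>2 else 0)" for v w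
  have "(\<Sum>v\<in>V. \<Sum>w\<in>V. f v w * (\<phi> w - \<phi> v))
      \<le> (\<Sum>v\<in>V. \<Sum>w\<in>V. e v w + \<pi> v * Q v w * (\<phi> w - \<phi> v)\<^sup>2 / 4)"
  proof (intro sum_mono)
    fix v w assume v: "v \<in> V" and w: "w \<in> V"
    show "f v w * (\<phi> w - \<phi> v) \<le> e v w + \<pi> v * Q v w * (\<phi> w - \<phi> v)\<^sup>2 / 4"
    proof (cases "v \<noteq> w \<and> Q v w > 0")
      case True
      then have "\<pi> v * Q v w > 0" using assms(2)[OF v] by simp
      from mult_le_power2_div_add[OF this] show ?thesis using True by (simp add: e_def)
    next
      case False
      then have "f v w = 0" using assms(1) unfolding is_flow_def by blast
      then show ?thesis using False assms(2)[OF v] assms(3)[OF v w] by (simp add: e_def)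
    qed
  qed
  also have "\<dots> = (\<Sum>v\<in>V. \<Sum>w\<in>V. e v w) + (\<Sum>v\<in>V. \<Sum>w\<in>V. \<pi> v * Q v w * (\<phi> w - \<phi> v)\<^sup>2) / 4"
    by (simp add: sum.distrib sum_divide_distrib)
  also have "(\<Sum>v\<in>V. \<Sum>w\<in>V. e v w) = 2 * energy V Q \<pi> f"
    by (simp add: e_def energy_def)
  finally show ?thesis .
qed

lemma energy_lower_bound:
  assumes "finite V" "stochastic V Q" "stationary V Q \<pi>" "\<And>v. v \<in> V \<Longrightarrow> \<pi> v > 0"
    and "is_flow V Q f"
  shows "- (\<Sum>v\<in>V. net_flow V f v * \<phi> v) \<le> energy V Q \<pi> f + (\<Sum>v\<in>V. \<pi> v * (\<phi> v)\<^sup>2) / 2"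
proof -
  have "\<And>v w. v \<in> V \<Longrightarrow> w \<in> V \<Longrightarrow> Q v w \<ge> 0"
    using assms(2) by (simp add: stochastic_def)
  then have "(\<Sum>v\<in>V. \<Sum>w\<in>V. f v w * (\<phi> w - \<phi> v))
      \<le> 2 * energy V Q \<pi> f + (\<Sum>v\<in>V. \<Sum>w\<in>V. \<pi> v * Q v w * (\<phi> w - \<phi> v)\<^sup>2) / 4"
    by (intro flow_pairing_le assms(4,5))
  then show ?thesis
    using net_flow_summation_by_parts[OF assms(5), where \<phi> = \<phi>]
      dirichlet_form_le[OF assms(1-3), where \<phi> = \<phi>]
    by linarith
qed

lemma ereal_le_R_eff:
  assumes "\<And>f. is_flow V Q f \<Longrightarrow> (\<forall>v\<in>V. net_flow V f v = \<xi> v) \<Longrightarrow> c \<le> energy V Q \<pi> f"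
  shows "ereal c \<le> R_eff V Q \<pi> \<xi>"
  unfolding R_eff_def using assms by (auto intro!: Inf_greatest)

lemma sum_diff_mult_divide_disjoint_supp:
  assumes "supp V \<sigma> \<inter> supp V \<nu> = {}"
  shows "(\<Sum>v\<in>V. (\<sigma> v - \<nu> v) * (\<nu> v / \<pi> v)) = - (\<Sum>v\<in>V. (\<nu> v)\<^sup>2 / \<pi> v)"
  unfolding sum_negf[symmetric]
proof (intro sum.cong refl)
  fix v assume "v \<in> V"
  then have "\<sigma> v * \<nu> v = 0"
    using assms by (auto simp: supp_def)
  then show "(\<sigma> v - \<nu> v) * (\<nu> v / \<pi> v) = - ((\<nu> v)\<^sup>2 / \<pi> v)"
    by (auto simp: left_diff_distrib power2_eq_square)
qed

theorem lemma3p3: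
  fixes V :: "'v set" and P :: "'v \<Rightarrow> 'v \<Rightarrow> real" and \<pi> \<sigma> \<nu> :: "'v \<Rightarrow> real" and t :: nat
  assumes "finite V" and "V \<noteq> {}"
    and "t \<ge> 1"
    and "stochastic V P"
    and "irreducible_chain V P"
    and "stationary V P \<pi>"
    and "reversible V P \<pi>"
    and "prob_dist V \<sigma>" and "prob_dist V \<nu>"
    and "supp V \<sigma> \<inter> supp V \<nu> = {}"
  shows "ereal (\<Sum>v\<in>V. (\<nu> v)\<^sup>2 / \<pi> v) \<le> 2 * R_eff V (mpow V P t) \<pi> (\<lambda>v. \<sigma> v - \<nu> v)"
proof -
  define S where "S = (\<Sum>v\<in>V. (\<nu> v)\<^sup>2 / \<pi> v)"
  define \<phi> where "\<phi> v = \<nu> v / \<pi> v" for v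
  have \<pi>_pos: "\<And>v. v \<in> V \<Longrightarrow> \<pi> v > 0" using stationary_pos[OF assms(1,4,5,6)] .
  have pairing: "(\<Sum>v\<in>V. (\<sigma> v - \<nu> v) * \<phi> v) = - S"
    unfolding S_def \<phi>_def using assms(10) by (rule sum_diff_mult_divide_disjoint_supp)
  have norm: "(\<Sum>v\<in>V. \<pi> v * (\<phi> v)\<^sup>2) = S"
    using \<pi>_pos by (auto simp: S_def \<phi>_def power2_eq_square intro!: sum.cong)
  have "ereal (S / 2) \<le> R_eff V (mpow V P t) \<pi> (\<lambda>v. \<sigma> v - \<nu> v)"
  proof (rule ereal_le_R_eff)
    fix f
    assume flow: "is_flow V (mpow V P t) f" and "\<forall>v\<in>V. net_flow V f v = \<sigma> v - \<nu> v"
    moreover have "- (\<Sum>v\<in>V. net_flow V f v * \<phi> v)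
        \<le> energy V (mpow V P t) \<pi> f + (\<Sum>v\<in>V. \<pi> v * (\<phi> v)\<^sup>2) / 2"
      using assms(1) stochastic_mpow[OF assms(1,4)] stationary_mpow[OF assms(1,6)] \<pi>_pos flow
      by (rule energy_lower_bound)
    ultimately show "S / 2 \<le> energy V (mpow V P t) \<pi> f"
      using pairing norm by simp
  qed
  from ereal_mult_left_mono[OF this, of 2] show ?thesis by (simp add: S_def)
qed

end
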